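(* Let $m\in\mathbb Z\setminus\{0\}$ and let $\mathfrak a\subseteq\mathcal O_K$ be an integral ideal coprime to $D$. Then for all $s\in\mathbb C$ \[ \sum_{\substack{d\mid m\\ d>0}} d^s\prod_{p\mid D}\big(\chi_{D(p)}(d)+\chi_{D(p)}(N(\mathfrak a)m/d)\big) =\sum_{D_1D_2=D}\chi_{D_1}(m_{D_2})\,\chi_{D_2}(N(\mathfrak a)m_0m_{D_1})\,m_{D_2}^{\,s}\prod_{p\nmid D}\frac{1-(\chi_D(p)p^s)^{\nu_p(m)+1}}{1-\chi_D(p)p^s}, \] where the sum on the right runs over all ordered factorizations $D=D_1D_2$ into two discriminants (integers $D_1,D_2\equiv 1\pmod 4$, possibly equal to $1$), $m_{D_i}=\prod_{p\mid D_i}p^{\nu_p(m)}$, $m_0=m/(m_{D_1}m_{D_2})$, and the last product runs over primes $p\nmid D$ (all but finitely many factors equal $1$).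
   Context: Let $K$ be a real quadratic number field whose discriminant $D$ is odd (so $D>0$ squarefree, $D\equiv1\pmod4$), with ring of integers $\mathcal O_K$; $N(\mathfrak a)$ denotes the absolute norm of an ideal. An ideal is coprime to $D$ if no prime ideal dividing $D\mathcal O_K$ divides it. $\nu_p$ is the $p$-adic valuation. For a discriminant $E\equiv 1\pmod 4$, $\chi_E(n)=\left(\frac{E}{n}\right)$ is the Kronecker symbol (in particular $\chi_D$). For each prime $p\mid D$ let $D(p)\in\{p,-p\}$ be the one with $D(p)\equiv1\pmod4$. *)

theory Defs
  imports "HOL-Analysis.Analysis" "HOL-Number_Theory.Number_Theory" "HOL-Computational_Algebra.Squarefree"
begin

text \<open>Ring of integers of K = Q(sqrt D), D = 1 mod 4, realised inside the reals:
  O_K = Z[(1 + sqrt D)/2].\<close>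
definition OK :: "int \<Rightarrow> real set" where
  "OK D = {of_int a + of_int b * ((1 + sqrt (of_int D)) / 2) | a b. True}"

definition is_ideal :: "real set \<Rightarrow> real set \<Rightarrow> bool" where
  "is_ideal R I \<longleftrightarrow> I \<subseteq> R \<and> 0 \<in> I \<and> (\<forall>x\<in>I. \<forall>y\<in>I. x + y \<in> I)
     \<and> (\<forall>x\<in>I. - x \<in> I) \<and> (\<forall>r\<in>R. \<forall>x\<in>I. r * x \<in> I)"

definition prime_ideal :: "real set \<Rightarrow> real set \<Rightarrow> bool" where
  "prime_ideal R P \<longleftrightarrow> is_ideal R P \<and> P \<noteq> R
     \<and> (\<forall>x\<in>R. \<forall>y\<in>R. x * y \<in> P \<longrightarrow> x \<in> P \<or> y \<in> P)"

definition ideal_norm :: "real set \<Rightarrow> real set \<Rightarrow> nat" where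
  "ideal_norm R I = card {{y \<in> R. x - y \<in> I} | x. x \<in> R}"

text \<open>No prime ideal dividing (i.e. containing) D O_K divides (contains) the ideal I.\<close>
definition coprime_to_disc :: "int \<Rightarrow> real set \<Rightarrow> bool" where
  "coprime_to_disc D I \<longleftrightarrow>
     (\<forall>P. prime_ideal (OK D) P \<and> {of_int D * x | x. x \<in> OK D} \<subseteq> P \<longrightarrow> \<not> I \<subseteq> P)"

definition kron_prime :: "int \<Rightarrow> nat \<Rightarrow> int" where
  "kron_prime a p = (if p = 2 then (if even a then 0 else if a mod 8 = 1 \<or> a mod 8 = 7 then 1 else -1)
                     else Legendre a (int p))"

definition kronecker :: "int \<Rightarrow> int \<Rightarrow> int" where
  "kronecker a n = (if n = 0 then (if \<bar>a\<bar> = 1 then 1 else 0)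
     else (if n < 0 \<and> a < 0 then -1 else 1) *
          (\<Prod>p\<in>prime_factors (nat \<bar>n\<bar>). kron_prime a p ^ multiplicity p (nat \<bar>n\<bar>)))"

definition disc_part :: "nat \<Rightarrow> int" where
  "disc_part p = (if int p mod 4 = 1 then int p else - int p)"

definition m_part :: "int \<Rightarrow> int \<Rightarrow> nat" where
  "m_part E m = (\<Prod>p\<in>prime_factors (nat \<bar>E\<bar>). p ^ multiplicity p (nat \<bar>m\<bar>))"

end

theory Submission
  imports Defs
begin

text \<open>Write chi_E for the Kronecker symbol (E / .) and N for the norm of the ideal. Expanding
  the product over the primes p of D, each factor being chi_D(p)(d) + chi_D(p)(N m/d), gives a sum
  over the subsets S of these primes of chi_D1(d) chi_D2(N m/d), where D1 is the product of the
  D(p) with p in S and D2 = D/D1; the subsets correspond bijectively to the factorizations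
  D = D1 D2 into discriminants. For a fixed pair, chi_D1(d) vanishes unless d is prime to D1 and
  chi_D2(N m/d) unless m/d is prime to D2; as D1 and D2 are coprime, this forces d = m_D2 d0 with
  d0 dividing m0 = m/(m_D1 m_D2), which is prime to D. Since chi_D2(d0)^2 = 1, the summand is then
  a constant times chi_D(d0) d0^s, a completely multiplicative function of d0, and its sum over
  the divisors of m0 is the Euler product on the right.\<close>

section \<open>The Kronecker symbol\<close>

lemma eq_if_abs_le_1_dvd_diff:
  fixes x y q :: int
  assumes "\<bar>x\<bar> \<le> 1" "\<bar>y\<bar> \<le> 1" "3 \<le> q" "q dvd x - y"
  shows "x = y"
proof (rule ccontr)
  assume "x \<noteq> y"
  then have "\<bar>q\<bar> \<le> \<bar>x - y\<bar>" using assms(4) dvd_imp_le_int by simp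
  then show False using assms(1-3) by linarith
qed

lemma Legendre_mult:
  assumes "prime p" "2 < p"
  shows "Legendre (a * b) (int p) = Legendre a (int p) * Legendre b (int p)"
proof (rule eq_if_abs_le_1_dvd_diff)
  let ?h = "(p - 1) div 2"
  have "[Legendre (a * b) (int p) = (a * b) ^ ?h] (mod int p)"
    by (rule euler_criterion[OF assms])
  moreover have "[Legendre a (int p) * Legendre b (int p) = a ^ ?h * b ^ ?h] (mod int p)"
    using euler_criterion[OF assms, of a] euler_criterion[OF assms, of b] by (rule cong_mult)
  ultimately have "[Legendre (a * b) (int p) = Legendre a (int p) * Legendre b (int p)] (mod int p)"
    by (metis cong_sym cong_trans power_mult_distrib)
  then show "int p dvd Legendre (a * b) (int p) - Legendre a (int p) * Legendre b (int p)"
    by (simp add: cong_iff_dvd_diff)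
  show "3 \<le> int p" using assms(2) by linarith
qed (auto simp: Legendre_def abs_mult)

lemma kron_prime_eq_0_iff: "prime p \<Longrightarrow> kron_prime a p = 0 \<longleftrightarrow> int p dvd a"
  unfolding kron_prime_def Legendre_def by (auto simp: cong_0_iff)

lemma abs_kron_prime_le_1: "\<bar>kron_prime a p\<bar> \<le> 1"
  unfolding kron_prime_def Legendre_def by auto

lemma kron_prime_mult:
  assumes "prime p"
  shows "kron_prime (a * b) p = kron_prime a p * kron_prime b p"
proof (cases "p = 2")
  case True
  show ?thesis
  proof (cases "even a \<or> even b")
    case False
    then have "a mod 8 = 1 \<or> a mod 8 = 3 \<or> a mod 8 = 5 \<or> a mod 8 = 7"
      and "b mod 8 = 1 \<or> b mod 8 = 3 \<or> b mod 8 = 5 \<or> b mod 8 = 7" by presburger+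
    moreover have "(a * b) mod 8 = (a mod 8) * (b mod 8) mod 8" by (simp add: mod_mult_eq)
    ultimately show ?thesis using False True by (elim disjE) (simp_all add: kron_prime_def)
  qed (use True in \<open>auto simp: kron_prime_def\<close>)
next
  case False
  then have "2 < p" using prime_ge_2_nat[OF assms] by linarith
  with False assms show ?thesis by (simp add: kron_prime_def Legendre_mult)
qed

lemma kronecker_altdef:
  assumes "n \<noteq> 0"
  shows "kronecker a n = (if n < 0 \<and> a < 0 then -1 else 1) *
           prod_mset (image_mset (kron_prime a) (prime_factorization (nat \<bar>n\<bar>)))"
proof -
  have "prod_mset (image_mset (kron_prime a) (prime_factorization (nat \<bar>n\<bar>)))
     = (\<Prod>p\<in>prime_factors (nat \<bar>n\<bar>). kron_prime a p ^ count (prime_factorization (nat \<bar>n\<bar>)) p)"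
    by (rule image_prod_mset_multiplicity)
  also have "\<dots> = (\<Prod>p\<in>prime_factors (nat \<bar>n\<bar>). kron_prime a p ^ multiplicity p (nat \<bar>n\<bar>))"
    by (intro prod.cong refl) (simp add: count_prime_factorization_prime in_prime_factors_imp_prime)
  finally show ?thesis using assms by (simp add: kronecker_def)
qed

lemma kronecker_one_left [simp]: "kronecker 1 n = 1"
proof -
  have "kron_prime 1 p = 1" if "prime p" for p
  proof -
    have "QuadRes (int p) 1" unfolding QuadRes_def by (rule exI[of _ 1]) simp
    with that prime_gt_1_nat[OF that] show ?thesis
      by (auto simp: kron_prime_def Legendre_def cong_0_iff)
  qed
  then show ?thesis
    by (cases "n = 0") (auto simp: kronecker_altdef in_prime_factors_imp_prime
        intro!: prod_mset.neutral, simp add: kronecker_def)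
qed

lemma kronecker_one_right [simp]: "kronecker a 1 = 1"
  by (simp add: kronecker_def)

lemma kronecker_mult_left:
  assumes "a \<noteq> 0" "b \<noteq> 0"
  shows "kronecker (a * b) n = kronecker a n * kronecker b n"
proof (cases "n = 0")
  case True
  have "\<bar>a * b\<bar> = 1 \<longleftrightarrow> \<bar>a\<bar> = 1 \<and> \<bar>b\<bar> = 1"
    using assms by (simp add: abs_mult pos_zmult_eq_1_iff)
  with True show ?thesis by (simp add: kronecker_def)
next
  case False
  have "image_mset (kron_prime (a * b)) (prime_factorization (nat \<bar>n\<bar>))
      = image_mset (\<lambda>p. kron_prime a p * kron_prime b p) (prime_factorization (nat \<bar>n\<bar>))"
    by (intro image_mset_cong) (auto simp: kron_prime_mult in_prime_factors_imp_prime)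
  with False assms show ?thesis
    by (auto simp: kronecker_altdef prod_mset.distrib mult_less_0_iff)
qed

lemma kronecker_mult_right:
  assumes "a mod 4 = 1"
  shows "kronecker a (x * y) = kronecker a x * kronecker a y"
proof (cases "x = 0 \<or> y = 0")
  case True
  show ?thesis
  proof (cases "a = 1")
    case False
    with assms have "\<bar>a\<bar> \<noteq> 1" by presburger
    with True show ?thesis by (auto simp: kronecker_def)
  qed simp
next
  case False
  then have "prime_factorization (nat \<bar>x * y\<bar>)
      = prime_factorization (nat \<bar>x\<bar>) + prime_factorization (nat \<bar>y\<bar>)"
    by (simp add: nat_abs_mult_distrib prime_factorization_mult)
  with False show ?thesis by (auto simp: kronecker_altdef mult_less_0_iff)
qed

lemma coprime_int_iff_no_common_prime:
  "coprime (a :: int) b \<longleftrightarrow> (\<forall>p. prime p \<longrightarrow> int p dvd a \<longrightarrow> \<not> int p dvd b)"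
proof
  assume "coprime a b"
  then show "\<forall>p. prime p \<longrightarrow> int p dvd a \<longrightarrow> \<not> int p dvd b"
    by (meson coprime_common_divisor not_prime_unit prime_nat_int_transfer)
next
  assume no_prime: "\<forall>p. prime p \<longrightarrow> int p dvd a \<longrightarrow> \<not> int p dvd b"
  show "coprime a b"
  proof (rule ccontr)
    assume "\<not> coprime a b"
    then have "nat (gcd a b) \<noteq> 1" by (simp add: coprime_iff_gcd_eq_1)
    then obtain p where "prime p" "p dvd nat (gcd a b)" using prime_factor_nat by blast
    then have "int p dvd gcd a b" by (metis int_dvd_int_iff gcd_ge_0_int int_nat_eq)
    with no_prime \<open>prime p\<close> show False by auto
  qed
qed

lemma kronecker_eq_0_iff: "kronecker a n = 0 \<longleftrightarrow> \<not> coprime a n"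
proof (cases "n = 0")
  case False
  then have "kronecker a n = 0 \<longleftrightarrow> 0 \<in># image_mset (kron_prime a) (prime_factorization (nat \<bar>n\<bar>))"
    unfolding kronecker_altdef[OF False] by simp
  also have "\<dots> \<longleftrightarrow> (\<exists>p\<in>prime_factors (nat \<bar>n\<bar>). kron_prime a p = 0)"
    by (force simp: image_iff)
  also have "\<dots> \<longleftrightarrow> (\<exists>p. prime p \<and> int p dvd a \<and> int p dvd n)"
    using False by (auto simp: kron_prime_eq_0_iff in_prime_factors_iff)
  finally show ?thesis by (simp add: coprime_int_iff_no_common_prime)
qed (auto simp: kronecker_def)

lemma kronecker_mult_self:
  assumes "coprime a n"
  shows "kronecker a n * kronecker a n = 1"
proof -
  have "\<bar>kronecker a n\<bar> \<le> 1"
    by (auto simp: kronecker_def abs_mult abs_prod power_abs abs_kron_prime_le_1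
        intro!: prod_le_1 power_le_one)
  moreover have "kronecker a n \<noteq> 0" using assms by (simp add: kronecker_eq_0_iff)
  ultimately have "kronecker a n = 1 \<or> kronecker a n = -1" by presburger
  then show ?thesis by auto
qed

section \<open>Divisor sums\<close>

lemma gcd_mult_eq_left:
  fixes x y d1 d2 :: nat
  assumes "coprime x y" "d1 dvd x" "d2 dvd y"
  shows "gcd (d1 * d2) x = d1"
  using assms by (metis coprime_mult_right_iff dvd_mult_div_cancel
    gcd_mult_left_right_cancel gcd_nat.order_iff)

lemma sum_divisors_mult_coprime:
  fixes f :: "nat \<Rightarrow> 'a::comm_semiring_1"
  assumes mult: "\<And>a b. coprime a b \<Longrightarrow> f (a * b) = f a * f b" and "coprime x y"
  shows "(\<Sum>d | d dvd x * y. f d) = (\<Sum>d | d dvd x. f d) * (\<Sum>d | d dvd y. f d)"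
proof -
  have split: "gcd (d1 * d2) x = d1 \<and> gcd (d1 * d2) y = d2" if "d1 dvd x" "d2 dvd y" for d1 d2
    using gcd_mult_eq_left[of x y d1 d2] gcd_mult_eq_left[of y x d2 d1] that \<open>coprime x y\<close>
    by (simp add: coprime_commute mult.commute)
  have "(\<Sum>d | d dvd x. f d) * (\<Sum>d | d dvd y. f d)
      = (\<Sum>(d1, d2)\<in>{d. d dvd x} \<times> {d. d dvd y}. f d1 * f d2)"
    by (simp add: sum_product sum.cartesian_product)
  also have "\<dots> = (\<Sum>d | d dvd x * y. f d)"
  proof (rule sum.reindex_bij_witness[where j = "\<lambda>(d1, d2). d1 * d2" and i = "\<lambda>d. (gcd d x, gcd d y)"])
    fix a assume "a \<in> {d. d dvd x} \<times> {d. d dvd y}"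
    then obtain d1 d2 where a: "a = (d1, d2)" "d1 dvd x" "d2 dvd y" by auto
    then have "coprime d1 d2"
      using \<open>coprime x y\<close> coprime_divisors by blast
    with a split show "(gcd (case a of (d1, d2) \<Rightarrow> d1 * d2) x, gcd (case a of (d1, d2) \<Rightarrow> d1 * d2) y) = a"
      and "(case a of (d1, d2) \<Rightarrow> d1 * d2) \<in> {d. d dvd x * y}"
      and "f (case a of (d1, d2) \<Rightarrow> d1 * d2) = (case a of (d1, d2) \<Rightarrow> f d1 * f d2)"
      by (auto simp: mult_dvd_mono mult)
  next
    fix d assume "d \<in> {d. d dvd x * y}"
    then obtain d1 d2 where "d = d1 * d2" "d1 dvd x" "d2 dvd y" using dvd_productE by blast
    with split show "(case (gcd d x, gcd d y) of (d1, d2) \<Rightarrow> d1 * d2) = d"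
      and "(gcd d x, gcd d y) \<in> {d. d dvd x} \<times> {d. d dvd y}" by auto
  qed
  finally show ?thesis ..
qed

lemma sum_divisors_prime_power:
  fixes f :: "nat \<Rightarrow> 'a::comm_semiring_1"
  assumes mult: "\<And>a b. f (a * b) = f a * f b" and one: "f 1 = 1" and "prime p"
  shows "(\<Sum>d | d dvd p ^ k. f d) = (\<Sum>i\<le>k. f p ^ i)"
proof -
  have "{d. d dvd p ^ k} = (\<lambda>i. p ^ i) ` {..k}"
    using divides_primepow_nat[OF \<open>prime p\<close>] by auto
  moreover have "inj_on (\<lambda>i. p ^ i) {..k}"
    using \<open>prime p\<close> by (intro inj_onI) (metis prime_gt_1_nat power_inject_exp)
  moreover have "f (p ^ i) = f p ^ i" for i
    by (induction i) (simp_all add: one[unfolded One_nat_def] mult)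
  ultimately show ?thesis by (simp add: sum.reindex)
qed

lemma sum_divisors_completely_multiplicative:
  fixes f :: "nat \<Rightarrow> 'a::comm_semiring_1"
  assumes mult: "\<And>a b. f (a * b) = f a * f b" and one: "f 1 = 1" and "n > 0"
  shows "(\<Sum>d | d dvd n. f d) = (\<Prod>p\<in>prime_factors n. \<Sum>k\<le>multiplicity p n. f p ^ k)"
  using \<open>n > 0\<close>
proof (induction n rule: less_induct)
  case (less n)
  show ?case
  proof (cases "n = 1")
    case False
    then obtain p where p: "prime p" "p dvd n" using prime_factor_nat by blast
    define k where "k = multiplicity p n"
    obtain n' where n': "n = p ^ k * n'" "\<not> p dvd n'"
      using multiplicity_decompose'[of n p] less.prems p(1) unfolding k_def
      by (metis not_prime_unit not_gr0)
    have "n' > 0" "k > 0"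
      using n' less.prems p by (auto simp: k_def prime_multiplicity_gt_zero_iff intro!: Nat.gr0I)
    then have "n' < n"
      using n'(1) p(1) by (metis prime_gt_1_nat one_less_power mult_less_cancel2 mult_1)
    have "prime_factors n = insert p (prime_factors n')"
      using n' \<open>n' > 0\<close> \<open>k > 0\<close> p by (simp add: prime_factors_product prime_factors_power prime_prime_factors)
    moreover have "p \<notin> prime_factors n'" using n'(2) by auto
    moreover have "multiplicity q n = multiplicity q n'" if "q \<in> prime_factors n'" for q
    proof -
      have "\<not> q dvd p ^ k" using that \<open>p \<notin> prime_factors n'\<close> p(1)
        by (metis in_prime_factors_imp_prime prime_dvd_power primes_dvd_imp_eq)
      then show ?thesis using n' \<open>n' > 0\<close> p(1) that
        by (simp add: prime_elem_multiplicity_mult_distrib not_dvd_imp_multiplicity_0 in_prime_factors_imp_prime)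
    qed
    moreover have "coprime (p ^ k) n'"
      using n'(2) p(1) by (simp add: prime_imp_coprime)
    then have "(\<Sum>d | d dvd n. f d) = (\<Sum>d | d dvd p ^ k. f d) * (\<Sum>d | d dvd n'. f d)"
      unfolding n'(1) by (intro sum_divisors_mult_coprime mult)
    ultimately show ?thesis
      using less.IH[OF \<open>n' < n\<close> \<open>n' > 0\<close>] sum_divisors_prime_power[OF mult one p(1)]
      by (simp add: k_def)
  qed (simp add: one[unfolded One_nat_def])
qed

lemma sum_pos_divisors_int:
  fixes m :: int
  assumes "m \<noteq> 0"
  shows "(\<Sum>d\<in>{d. d dvd m \<and> d > 0}. f d) = (\<Sum>d | d dvd nat \<bar>m\<bar>. f (int d))"
proof -
  have "{d. d dvd m \<and> d > 0} = int ` {d. d dvd nat \<bar>m\<bar>}"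
  proof (intro equalityI subsetI)
    fix d assume "d \<in> {d. d dvd m \<and> d > 0}"
    then have "d = int (nat d)" "nat d \<in> {d. d dvd nat \<bar>m\<bar>}" by auto
    then show "d \<in> int ` {d. d dvd nat \<bar>m\<bar>}" by blast
  qed (use assms in \<open>auto intro!: Nat.gr0I\<close>)
  then show ?thesis by (simp add: sum.reindex)
qed

lemma divisor_eq_mult_if_coprime:
  fixes a b c d e :: "'a::semiring_gcd"
  assumes "d * e = a * b * c" "coprime d a" "coprime e b" "b \<noteq> 0"
  shows "\<exists>d0. d = b * d0 \<and> d0 dvd c"
proof -
  have "b dvd d * e" using assms(1) by (metis dvd_triv_left mult.commute mult.left_commute)
  with assms(3) obtain d0 where d0: "d = b * d0"
    by (metis coprime_commute coprime_dvd_mult_left_iff dvdE)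
  with assms(1) have "b * (d0 * e) = b * (a * c)" by (simp add: ac_simps)
  with assms(4) have "d0 * e = a * c" by simp
  moreover have "coprime d0 a" using assms(2) d0 by simp
  ultimately have "d0 dvd c" by (metis coprime_dvd_mult_right_iff dvd_triv_left)
  with d0 show ?thesis by blast
qed

lemma sum_pos_divisors_multiples:
  fixes m b c :: int
  assumes "m \<noteq> 0" "b > 0" "b * c dvd m"
    and support: "\<And>d. d dvd m \<Longrightarrow> d > 0 \<Longrightarrow> f d \<noteq> 0 \<Longrightarrow> \<exists>d0. d = b * d0 \<and> d0 dvd c"
  shows "(\<Sum>d\<in>{d. d dvd m \<and> d > 0}. f d) = (\<Sum>d0\<in>{d0. d0 dvd c \<and> d0 > 0}. f (b * d0))"
proof -
  have "(\<Sum>d\<in>{d. d dvd m \<and> d > 0}. f d) = (\<Sum>d\<in>(\<lambda>d0. b * d0) ` {d0. d0 dvd c \<and> d0 > 0}. f d)"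
  proof (rule sum.mono_neutral_right)
    show "finite {d. d dvd m \<and> d > 0}"
      by (rule finite_subset[OF _ finite_divisors_int[OF \<open>m \<noteq> 0\<close>]]) blast
    show "(\<lambda>d0. b * d0) ` {d0. d0 dvd c \<and> d0 > 0} \<subseteq> {d. d dvd m \<and> d > 0}"
      using assms(2,3) by (auto intro: dvd_trans[OF mult_dvd_mono[OF dvd_refl]])
    show "\<forall>d\<in>{d. d dvd m \<and> d > 0} - (\<lambda>d0. b * d0) ` {d0. d0 dvd c \<and> d0 > 0}. f d = 0"
    proof (rule ballI, rule ccontr)
      fix d assume d: "d \<in> {d. d dvd m \<and> d > 0} - (\<lambda>d0. b * d0) ` {d0. d0 dvd c \<and> d0 > 0}" "f d \<noteq> 0"
      then obtain d0 where "d = b * d0" "d0 dvd c" using support by blast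
      moreover from this have "d0 > 0" using d(1) \<open>b > 0\<close> by (simp add: zero_less_mult_iff)
      ultimately show False using d(1) by blast
    qed
  qed
  also have "\<dots> = (\<Sum>d0\<in>{d0. d0 dvd c \<and> d0 > 0}. f (b * d0))"
    using \<open>b > 0\<close> by (subst sum.reindex) (auto simp: inj_on_def)
  finally show ?thesis .
qed

section \<open>The parts of m belonging to the primes of E\<close>

lemma m_part_pos [simp]: "m_part E m > 0"
  unfolding m_part_def by (intro prod_pos) (auto simp: in_prime_factors_iff prime_gt_0_nat)

lemma multiplicity_m_part:
  assumes "prime q"
  shows "multiplicity q (m_part E m) =
    (if q \<in> prime_factors (nat \<bar>E\<bar>) then multiplicity q (nat \<bar>m\<bar>) else 0)"
  unfolding m_part_def
  by (rule multiplicity_prod_prime_powers) (auto simp: assms in_prime_factors_iff)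

lemma coprime_m_part:
  assumes "coprime E x"
  shows "coprime (int (m_part E m)) x"
proof (unfold coprime_int_iff_no_common_prime, intro allI impI)
  fix q assume "prime q" "int q dvd int (m_part E m)"
  then have "multiplicity q (m_part E m) > 0"
    by (simp add: prime_multiplicity_gt_zero_iff)
  then have "q \<in> prime_factors (nat \<bar>E\<bar>)"
    using multiplicity_m_part[OF \<open>prime q\<close>, of E m] by (simp split: if_splits)
  then have "int q dvd E" by (simp add: in_prime_factors_iff)
  with assms \<open>prime q\<close> show "\<not> int q dvd x"
    by (auto simp: coprime_int_iff_no_common_prime)
qed

lemma m_part_mult:
  assumes "coprime E1 E2" "E1 \<noteq> 0" "E2 \<noteq> 0"
  shows "m_part (E1 * E2) m = m_part E1 m * m_part E2 m"
proof -
  have "prime_factors (nat \<bar>E1\<bar>) \<inter> prime_factors (nat \<bar>E2\<bar>) = {}"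
    using assms(1) by (auto simp: in_prime_factors_iff coprime_int_iff_no_common_prime)
  with assms(2,3) show ?thesis
    unfolding m_part_def by (simp add: abs_mult nat_mult_distrib prime_factors_product prod.union_disjoint)
qed

lemma m_part_dvd: "m \<noteq> 0 \<Longrightarrow> m_part E m dvd nat \<bar>m\<bar>"
  by (rule multiplicity_le_imp_dvd) (auto simp: multiplicity_m_part)

lemma m_part_cofactor_pos: "m \<noteq> 0 \<Longrightarrow> nat \<bar>m\<bar> div m_part E m > 0"
  using m_part_dvd[of m E] by (metis dvd_div_eq_0_iff gr0I nat_0_iff abs_ge_zero abs_eq_0 antisym_conv)

lemma multiplicity_m_part_cofactor:
  assumes "m \<noteq> 0" "E \<noteq> 0" "prime q"
  shows "multiplicity q (nat \<bar>m\<bar> div m_part E m) =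
    (if int q dvd E then 0 else multiplicity q (nat \<bar>m\<bar>))"
proof -
  have "nat \<bar>m\<bar> = m_part E m * (nat \<bar>m\<bar> div m_part E m)"
    using m_part_dvd[OF assms(1)] by simp
  then have "multiplicity q (nat \<bar>m\<bar>) = multiplicity q (m_part E m) + multiplicity q (nat \<bar>m\<bar> div m_part E m)"
    using m_part_cofactor_pos[OF assms(1), of E] \<open>prime q\<close>
    by (metis prime_elem_multiplicity_mult_distrib prime_imp_prime_elem m_part_pos less_numeral_extra(3))
  then show ?thesis
    using assms by (auto simp: multiplicity_m_part in_prime_factors_iff)
qed

lemma coprime_m_part_cofactor:
  assumes "m \<noteq> 0" "E \<noteq> 0"
  shows "coprime (int (nat \<bar>m\<bar> div m_part E m)) E"
proof (unfold coprime_int_iff_no_common_prime, intro allI impI notI)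
  fix q assume "prime q" "int q dvd int (nat \<bar>m\<bar> div m_part E m)" "int q dvd E"
  moreover note m_part_cofactor_pos[OF assms(1), of E]
  ultimately show False
    using multiplicity_m_part_cofactor[OF assms \<open>prime q\<close>]
    by (simp add: prime_multiplicity_gt_zero_iff[symmetric])
qed

lemma sum_divisors_m_part_cofactor:
  fixes f :: "nat \<Rightarrow> 'a::comm_semiring_1"
  assumes mult: "\<And>a b. f (a * b) = f a * f b" and one: "f 1 = 1" and "m \<noteq> 0" "E \<noteq> 0"
  shows "(\<Sum>d | d dvd nat \<bar>m\<bar> div m_part E m. f d)
    = (\<Prod>p\<in>{p\<in>prime_factors (nat \<bar>m\<bar>). \<not> int p dvd E}. \<Sum>k\<le>multiplicity p (nat \<bar>m\<bar>). f p ^ k)"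
proof -
  define c where "c = nat \<bar>m\<bar> div m_part E m"
  have "c > 0" using m_part_cofactor_pos[OF assms(3)] by (simp add: c_def)
  have mult_c: "multiplicity p c = (if int p dvd E then 0 else multiplicity p (nat \<bar>m\<bar>))"
    if "prime p" for p
    unfolding c_def using multiplicity_m_part_cofactor[OF assms(3,4) that] .
  have "prime_factors c = {p\<in>prime_factors (nat \<bar>m\<bar>). \<not> int p dvd E}"
    using \<open>c > 0\<close> assms(3) mult_c
    by (auto simp: prime_factors_multiplicity split: if_splits)
  then show ?thesis
    unfolding c_def[symmetric] sum_divisors_completely_multiplicative[OF mult one \<open>c > 0\<close>]
    by (intro prod.cong) (auto simp: mult_c in_prime_factors_iff)
qed

section \<open>A single pair of characters\<close>

lemma powr_of_nat_mult: "complex_of_nat (x * y) powr s = of_nat x powr s * of_nat y powr s"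
  by (subst of_nat_mult) (rule powr_times_real, auto)

lemma kronecker_pair_summand:
  fixes D1 D2 N a b d0 e :: int
  assumes "D1 mod 4 = 1" "D2 mod 4 = 1" "coprime D2 d0" "b * d0 \<noteq> 0"
  shows "kronecker D1 (b * d0) * kronecker D2 (N * (a * b * (d0 * e)) div (b * d0))
    = kronecker D1 b * kronecker D2 (N * (d0 * e) * a) * kronecker (D1 * D2) d0"
proof -
  have "D1 \<noteq> 0" "D2 \<noteq> 0" using assms(1,2) by auto
  have factored: "N * (a * b * (d0 * e)) = (b * d0) * (N * a * e)" by (simp add: ac_simps)
  have quotient: "N * (a * b * (d0 * e)) div (b * d0) = N * a * e"
    unfolding factored using assms(4) by (rule nonzero_mult_div_cancel_left)
  have "kronecker D1 b * kronecker D2 (N * (d0 * e) * a) * kronecker (D1 * D2) d0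
      = kronecker D1 b * kronecker D1 d0 * kronecker D2 (N * a * e) * (kronecker D2 d0 * kronecker D2 d0)"
    using kronecker_mult_right[OF assms(2), of "N * a * e" d0]
    by (simp add: kronecker_mult_left[OF \<open>D1 \<noteq> 0\<close> \<open>D2 \<noteq> 0\<close>] ac_simps)
  also have "\<dots> = kronecker D1 (b * d0) * kronecker D2 (N * a * e)"
    using kronecker_mult_self[OF assms(3)] kronecker_mult_right[OF assms(1), of b d0] by simp
  finally show ?thesis unfolding quotient by (rule sym)
qed

lemma m_part_pair_cofactor:
  assumes "coprime D1 D2" "D1 \<noteq> 0" "D2 \<noteq> 0" "m \<noteq> 0"
  defines "c \<equiv> m div int (m_part D1 m * m_part D2 m)"
  shows "m = int (m_part D1 m) * int (m_part D2 m) * c"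
    and "nat \<bar>m\<bar> div m_part (D1 * D2) m = nat \<bar>c\<bar>"
    and "coprime c (D1 * D2)"
proof -
  have ab: "m_part D1 m * m_part D2 m = m_part (D1 * D2) m"
    using m_part_mult[OF assms(1-3)] by simp
  have "int (m_part D1 m * m_part D2 m) dvd m"
    using m_part_dvd[OF \<open>m \<noteq> 0\<close>, of "D1 * D2"] by (simp add: ab)
  then show m_eq: "m = int (m_part D1 m) * int (m_part D2 m) * c"
    unfolding c_def by (metis dvd_mult_div_cancel of_nat_mult)
  have "nat \<bar>m\<bar> = m_part (D1 * D2) m * nat \<bar>c\<bar>"
    by (subst m_eq) (simp add: abs_mult nat_mult_distrib flip: ab)
  then show cofactor: "nat \<bar>m\<bar> div m_part (D1 * D2) m = nat \<bar>c\<bar>" by simp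
  show "coprime c (D1 * D2)"
    using coprime_m_part_cofactor[OF \<open>m \<noteq> 0\<close>, of "D1 * D2"] assms(2,3) by (simp add: cofactor)
qed

lemma kronecker_pair_support:
  fixes D1 D2 N m d :: int
  assumes "m = int (m_part D1 m) * int (m_part D2 m) * c" "m \<noteq> 0" "d dvd m"
    and "kronecker D1 d \<noteq> 0" "kronecker D2 (N * m div d) \<noteq> 0"
  shows "\<exists>d0. d = int (m_part D2 m) * d0 \<and> d0 dvd c"
proof -
  obtain e where e: "m = d * e" using \<open>d dvd m\<close> by blast
  with assms(2) have "N * m div d = N * e" by simp
  with assms(4,5) have "coprime d (int (m_part D1 m))" "coprime e (int (m_part D2 m))"
    unfolding kronecker_eq_0_iff by (auto intro!: coprime_m_part simp: coprime_commute[of _ "int _"])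
  moreover have "d * e = int (m_part D1 m) * int (m_part D2 m) * c" using e assms(1) by simp
  ultimately show ?thesis by (intro divisor_eq_mult_if_coprime) auto
qed

lemma sum_divisors_kronecker_pair:
  fixes D1 D2 N m :: int and s :: complex
  assumes D1: "D1 mod 4 = 1" and D2: "D2 mod 4 = 1" and "coprime D1 D2" and "m \<noteq> 0"
  shows "(\<Sum>d\<in>{d. d dvd m \<and> d > 0}. complex_of_int d powr s *
            of_int (kronecker D1 d * kronecker D2 (N * m div d)))
   = of_int (kronecker D1 (int (m_part D2 m))
       * kronecker D2 (N * (m div int (m_part D1 m * m_part D2 m)) * int (m_part D1 m)))
     * complex_of_nat (m_part D2 m) powr s
     * (\<Prod>p\<in>{p\<in>prime_factors (nat \<bar>m\<bar>). \<not> int p dvd D1 * D2}.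
          \<Sum>k\<le>multiplicity p (nat \<bar>m\<bar>).
            (of_int (kronecker (D1 * D2) (int p)) * complex_of_nat p powr s) ^ k)"
proof -
  define a where "a = m_part D1 m"
  define b where "b = m_part D2 m"
  define c where "c = m div int (a * b)"
  define F where "F d = complex_of_int d powr s * of_int (kronecker D1 d * kronecker D2 (N * m div d))"
    for d
  define G where "G d = of_int (kronecker (D1 * D2) (int d)) * complex_of_nat d powr s" for d
  define K where "K = of_int (kronecker D1 (int b) * kronecker D2 (N * c * int a)) * complex_of_nat b powr s"
  have "D1 \<noteq> 0" "D2 \<noteq> 0" using D1 D2 by auto
  have "b > 0" by (simp add: b_def)
  note cofactor = m_part_pair_cofactor[OF assms(3) \<open>D1 \<noteq> 0\<close> \<open>D2 \<noteq> 0\<close> \<open>m \<noteq> 0\<close>,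
      folded a_def b_def, folded c_def]
  have m_eq: "m = int a * int b * c" by (fact cofactor(1))
  have "c \<noteq> 0" using m_eq \<open>m \<noteq> 0\<close> by auto
  have support: "\<exists>d0. d = int b * d0 \<and> d0 dvd c" if "d dvd m" "F d \<noteq> 0" for d
    using kronecker_pair_support[OF cofactor(1)[unfolded a_def b_def] \<open>m \<noteq> 0\<close> that(1)] that(2)
    by (auto simp: F_def b_def)
  have summand: "F (int b * d0) = K * G (nat d0)" if "d0 dvd c" "d0 > 0" for d0
  proof -
    obtain e where e: "c = d0 * e" using \<open>d0 dvd c\<close> by blast
    have "coprime d0 D2"
      by (rule coprime_divisors[OF \<open>d0 dvd c\<close> dvd_refl]) (use cofactor(3) in simp)
    then have "kronecker D1 (int b * d0) * kronecker D2 (N * m div (int b * d0))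
        = kronecker D1 (int b) * kronecker D2 (N * c * int a) * kronecker (D1 * D2) d0"
      using kronecker_pair_summand[OF D1 D2, of d0 "int b" N "int a" e] \<open>b > 0\<close> \<open>d0 > 0\<close>
      unfolding m_eq e by (simp add: coprime_commute)
    moreover have "complex_of_int (int b * d0) powr s = of_nat b powr s * of_nat (nat d0) powr s"
      using powr_of_nat_mult[of b "nat d0" s] \<open>d0 > 0\<close> by simp
    ultimately show ?thesis
      using \<open>d0 > 0\<close> by (simp add: F_def K_def G_def mult_ac)
  qed
  have "(\<Sum>d\<in>{d. d dvd m \<and> d > 0}. F d) = (\<Sum>d0\<in>{d0. d0 dvd c \<and> d0 > 0}. K * G (nat d0))"
    using sum_pos_divisors_multiples[OF \<open>m \<noteq> 0\<close>, of "int b" c F] support summand \<open>b > 0\<close>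
    by (simp add: m_eq)
  also have "\<dots> = K * (\<Sum>d0 | d0 dvd nat \<bar>m\<bar> div m_part (D1 * D2) m. G d0)"
    unfolding cofactor(2) using sum_pos_divisors_int[OF \<open>c \<noteq> 0\<close>, of "\<lambda>d. K * G (nat d)"]
    by (simp add: sum_distrib_left)
  also have "\<dots> = K * (\<Prod>p\<in>{p\<in>prime_factors (nat \<bar>m\<bar>). \<not> int p dvd D1 * D2}.
                        \<Sum>k\<le>multiplicity p (nat \<bar>m\<bar>). G p ^ k)"
  proof -
    have "(D1 * D2) mod 4 = (D1 mod 4) * (D2 mod 4) mod 4" by (simp add: mod_mult_eq)
    with D1 D2 have "(D1 * D2) mod 4 = 1" by simp
    then have "G (x * y) = G x * G y" for x y
      using powr_of_nat_mult[of x y s] by (simp add: G_def kronecker_mult_right)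
    moreover have "G 1 = 1" by (simp add: G_def)
    ultimately show ?thesis
      using sum_divisors_m_part_cofactor[of G] \<open>m \<noteq> 0\<close> \<open>D1 \<noteq> 0\<close> \<open>D2 \<noteq> 0\<close> by simp
  qed
  finally show ?thesis by (simp add: F_def G_def K_def a_def b_def c_def mult.assoc)
qed

section \<open>Factorizations of D into discriminants\<close>

definition disc_of_primes :: "nat set \<Rightarrow> int" where
  "disc_of_primes S = (\<Prod>p\<in>S. disc_part p)"

lemma disc_part_mod_4:
  assumes "prime p" "p \<noteq> 2"
  shows "disc_part p mod 4 = 1"
proof -
  have "odd (int p)" using prime_odd_nat[OF assms(1)] prime_ge_2_nat[OF assms(1)] assms(2) by simp
  then have "int p mod 4 = 1 \<or> int p mod 4 = 3" by presburger
  then show ?thesis by (auto simp: disc_part_def) presburger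
qed

lemma disc_of_primes_mod_4:
  "(\<And>p. p \<in> S \<Longrightarrow> prime p \<and> p \<noteq> 2) \<Longrightarrow> disc_of_primes S mod 4 = 1"
  unfolding disc_of_primes_def
  by (subst mod_prod_eq[symmetric]) (simp add: disc_part_mod_4 cong: prod.cong)

lemma abs_disc_part [simp]: "\<bar>disc_part p\<bar> = int p"
  by (simp add: disc_part_def)

lemma abs_disc_of_primes: "\<bar>disc_of_primes S\<bar> = int (\<Prod>p\<in>S. p)"
  by (simp add: disc_of_primes_def abs_prod)

lemma kronecker_disc_of_primes:
  assumes "finite S" "\<And>p. p \<in> S \<Longrightarrow> prime p"
  shows "kronecker (disc_of_primes S) x = (\<Prod>p\<in>S. kronecker (disc_part p) x)"
  using assms unfolding disc_of_primes_def
proof (induction S rule: finite_induct)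
  case (insert q S)
  have "disc_part p \<noteq> 0" if "prime p" for p
    using that by (simp add: disc_part_def prime_gt_0_nat)
  with insert show ?case by (simp add: kronecker_mult_left prod_zero_iff)
qed simp

lemma prime_factors_prod_primes:
  assumes "finite S" "\<And>p. p \<in> S \<Longrightarrow> prime (p :: nat)"
  shows "prime_factors (\<Prod>p\<in>S. p) = S"
proof -
  have "prime_factorization (\<Prod>\<^sub># (mset_set S)) = mset_set S"
    by (rule prime_factorization_prod_mset_primes) (use assms in auto)
  with assms(1) show ?thesis by (simp add: prod_unfold_prod_mset)
qed

lemma squarefree_nat_abs:
  assumes "squarefree (E :: int)"
  shows "squarefree (nat \<bar>E\<bar>)"
proof (rule squarefreeI)
  fix x :: nat
  assume "x ^ 2 dvd nat \<bar>E\<bar>"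
  then have "int x ^ 2 dvd E" by simp
  with assms have "int x dvd 1" by (rule squarefreeD)
  then show "x dvd 1" by simp
qed

lemma prod_prime_factors_squarefree:
  assumes "squarefree (n :: nat)"
  shows "(\<Prod>p\<in>prime_factors n. p) = n"
proof -
  have "n \<noteq> 0" using assms by (cases "n = 0") auto
  then have "(\<Prod>p\<in>prime_factors n. p ^ multiplicity p n) = n"
    using prod_prime_factors[of n] by simp
  moreover have "multiplicity p n = 1" if "p \<in> prime_factors n" for p
    using assms that squarefree_factorial_semiring'[OF \<open>n \<noteq> 0\<close>] by blast
  ultimately show ?thesis by simp
qed

lemma eq_if_abs_eq_mod_4:
  fixes x y :: int
  assumes "x mod 4 = 1" "y mod 4 = 1" "\<bar>x\<bar> = \<bar>y\<bar>"
  shows "x = y"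
  using assms by (auto simp: abs_if split: if_splits) presburger+

lemma prime_factors_mod_4_odd:
  assumes "E mod 4 = 1" "p \<in> prime_factors (nat \<bar>E\<bar>)"
  shows "prime p \<and> p \<noteq> 2"
proof -
  from assms(2) have "prime p" "int p dvd E" by (auto simp: in_prime_factors_iff)
  with assms(1) show ?thesis by auto presburger
qed

lemma disc_of_primes_prime_factors:
  assumes "squarefree E" "E mod 4 = 1"
  shows "disc_of_primes (prime_factors (nat \<bar>E\<bar>)) = E"
proof (rule eq_if_abs_eq_mod_4)
  show "disc_of_primes (prime_factors (nat \<bar>E\<bar>)) mod 4 = 1"
    by (rule disc_of_primes_mod_4) (use prime_factors_mod_4_odd[OF assms(2)] in blast)
  show "\<bar>disc_of_primes (prime_factors (nat \<bar>E\<bar>))\<bar> = \<bar>E\<bar>"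
    using prod_prime_factors_squarefree[OF squarefree_nat_abs[OF assms(1)]]
    by (simp add: abs_disc_of_primes)
qed (fact assms(2))

lemma disc_of_primes_mult_complement:
  assumes "squarefree D" "D mod 4 = 1" "S \<subseteq> prime_factors (nat \<bar>D\<bar>)"
  shows "disc_of_primes S * disc_of_primes (prime_factors (nat \<bar>D\<bar>) - S) = D"
proof -
  have "disc_of_primes (prime_factors (nat \<bar>D\<bar>))
      = disc_of_primes (prime_factors (nat \<bar>D\<bar>) - S) * disc_of_primes S"
    unfolding disc_of_primes_def using assms(3) by (rule prod.subset_diff) simp
  then show ?thesis
    using disc_of_primes_prime_factors[OF assms(1,2)] by (simp add: mult.commute)
qed

lemma prime_factors_disc_of_primes:
  assumes "finite S" "\<And>p. p \<in> S \<Longrightarrow> prime p"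
  shows "prime_factors (nat \<bar>disc_of_primes S\<bar>) = S"
  unfolding abs_disc_of_primes nat_int using assms by (rule prime_factors_prod_primes)

lemma coprime_if_squarefree_mult:
  assumes "squarefree (a * b :: int)"
  shows "coprime a b"
proof -
  have "gcd a b ^ 2 dvd a * b" by (simp add: power2_eq_square mult_dvd_mono)
  with assms have "is_unit (gcd a b)" by (rule squarefreeD)
  then show ?thesis by (simp only: is_unit_gcd)
qed

lemma bij_betw_disc_factorizations:
  fixes D :: int
  defines "P \<equiv> prime_factors (nat \<bar>D\<bar>)"
  assumes "squarefree D" "D mod 4 = 1"
  shows "bij_betw (\<lambda>S. (disc_of_primes S, disc_of_primes (P - S))) (Pow P)
           {(D1, D2). D1 * D2 = D \<and> D1 mod 4 = 1 \<and> D2 mod 4 = 1}"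
proof -
  have "D \<noteq> 0" using assms(3) by auto
  note odd_primes = prime_factors_mod_4_odd[OF assms(3), folded P_def]
  note split = disc_of_primes_mult_complement[OF assms(2,3), folded P_def]
  have factor_subset: "prime_factors (nat \<bar>D1\<bar>) \<subseteq> P" if "D1 * D2 = D" for D1 D2
    using that \<open>D \<noteq> 0\<close> unfolding P_def by (intro dvd_prime_factors) (auto simp: abs_mult nat_mult_distrib)
  have left_inverse: "prime_factors (nat \<bar>disc_of_primes S\<bar>) = S" if "S \<subseteq> P" for S
    using that odd_primes finite_subset[of S P]
    by (intro prime_factors_disc_of_primes) (auto simp: P_def)
  have right_inverse: "disc_of_primes (prime_factors (nat \<bar>D1\<bar>)) = D1
      \<and> disc_of_primes (P - prime_factors (nat \<bar>D1\<bar>)) = D2"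
    if "D1 * D2 = D" "D1 mod 4 = 1" for D1 D2
  proof
    show D1: "disc_of_primes (prime_factors (nat \<bar>D1\<bar>)) = D1"
      using that assms(2) squarefree_multD(1) by (auto intro: disc_of_primes_prime_factors)
    show "disc_of_primes (P - prime_factors (nat \<bar>D1\<bar>)) = D2"
      using split[OF factor_subset[OF that(1)]] that(1) \<open>D \<noteq> 0\<close>
      by (metis D1 mult_left_cancel mult_zero_left)
  qed
  have disc_mod_4: "disc_of_primes S mod 4 = 1" if "S \<subseteq> P" for S
    by (rule disc_of_primes_mod_4) (use that odd_primes in blast)
  have "inj_on (\<lambda>S. (disc_of_primes S, disc_of_primes (P - S))) (Pow P)"
  proof (rule inj_onI)
    fix S S' assume "S \<in> Pow P" "S' \<in> Pow P"
      and "(disc_of_primes S, disc_of_primes (P - S)) = (disc_of_primes S', disc_of_primes (P - S'))"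
    then have "disc_of_primes S = disc_of_primes S'" by simp
    then show "S = S'" using left_inverse[of S] left_inverse[of S'] \<open>S \<in> Pow P\<close> \<open>S' \<in> Pow P\<close>
      by (metis PowD)
  qed
  moreover have "(\<lambda>S. (disc_of_primes S, disc_of_primes (P - S))) ` Pow P
      = {(D1, D2). D1 * D2 = D \<and> D1 mod 4 = 1 \<and> D2 mod 4 = 1}"
  proof (intro equalityI subsetI)
    fix y assume "y \<in> (\<lambda>S. (disc_of_primes S, disc_of_primes (P - S))) ` Pow P"
    then obtain S where "S \<subseteq> P" "y = (disc_of_primes S, disc_of_primes (P - S))" by auto
    then show "y \<in> {(D1, D2). D1 * D2 = D \<and> D1 mod 4 = 1 \<and> D2 mod 4 = 1}"
      using split[of S] disc_mod_4[of S] disc_mod_4[of "P - S"] by auto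
  next
    fix y assume "y \<in> {(D1, D2). D1 * D2 = D \<and> D1 mod 4 = 1 \<and> D2 mod 4 = 1}"
    then obtain D1 D2 where "y = (D1, D2)" "D1 * D2 = D" "D1 mod 4 = 1" by auto
    with right_inverse[of D1 D2] factor_subset[of D1 D2]
    have "y = (disc_of_primes (prime_factors (nat \<bar>D1\<bar>)), disc_of_primes (P - prime_factors (nat \<bar>D1\<bar>)))"
      and "prime_factors (nat \<bar>D1\<bar>) \<in> Pow P" by auto
    then show "y \<in> (\<lambda>S. (disc_of_primes S, disc_of_primes (P - S))) ` Pow P" by (rule image_eqI)
  qed
  ultimately show ?thesis by (simp add: bij_betw_def)
qed

lemma prod_kronecker_disc_part_add:
  assumes "finite P" "\<And>p. p \<in> P \<Longrightarrow> prime p"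
  shows "(\<Prod>p\<in>P. kronecker (disc_part p) x + kronecker (disc_part p) y)
    = (\<Sum>S\<in>Pow P. kronecker (disc_of_primes S) x * kronecker (disc_of_primes (P - S)) y)"
proof -
  have "kronecker (disc_of_primes S) x * kronecker (disc_of_primes (P - S)) y
      = (\<Prod>p\<in>S. kronecker (disc_part p) x) * (\<Prod>p\<in>P - S. kronecker (disc_part p) y)"
    if "S \<subseteq> P" for S
  proof -
    have "kronecker (disc_of_primes S) x = (\<Prod>p\<in>S. kronecker (disc_part p) x)"
      by (rule kronecker_disc_of_primes) (use that assms finite_subset in blast)+
    moreover have "kronecker (disc_of_primes (P - S)) y = (\<Prod>p\<in>P - S. kronecker (disc_part p) y)"
      by (rule kronecker_disc_of_primes) (use assms in auto)
    ultimately show ?thesis by simp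
  qed
  then show ?thesis by (simp add: prod_add[OF assms(1)])
qed

theorem sum_divisors_prod_kronecker_disc_part:
  fixes D m N :: int and s :: complex
  assumes "squarefree D" "D mod 4 = 1" "m \<noteq> 0"
  shows "(\<Sum>d\<in>{d. d dvd m \<and> d > 0}. complex_of_int d powr s *
            (\<Prod>p\<in>prime_factors (nat \<bar>D\<bar>).
               of_int (kronecker (disc_part p) d + kronecker (disc_part p) (N * m div d))))
       = (\<Sum>(D1, D2)\<in>{(D1, D2). D1 * D2 = D \<and> D1 mod 4 = 1 \<and> D2 mod 4 = 1}.
            of_int (kronecker D1 (int (m_part D2 m))
                    * kronecker D2 (N * (m div int (m_part D1 m * m_part D2 m)) * int (m_part D1 m)))
            * complex_of_nat (m_part D2 m) powr s
            * (\<Prod>p\<in>{p\<in>prime_factors (nat \<bar>m\<bar>). \<not> int p dvd D}.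
                 \<Sum>k\<le>multiplicity p (nat \<bar>m\<bar>).
                   (of_int (kronecker D (int p)) * complex_of_nat p powr s) ^ k))"
  (is "?lhs = ?rhs")
proof -
  define P where "P = prime_factors (nat \<bar>D\<bar>)"
  define pair_sum where "pair_sum D1 D2 = (\<Sum>d\<in>{d. d dvd m \<and> d > 0}. complex_of_int d powr s *
      of_int (kronecker D1 d * kronecker D2 (N * m div d)))" for D1 D2
  have expand: "(\<Prod>p\<in>P. of_int (kronecker (disc_part p) d + kronecker (disc_part p) x) :: complex)
      = (\<Sum>S\<in>Pow P. of_int (kronecker (disc_of_primes S) d * kronecker (disc_of_primes (P - S)) x))"
    for d x
    unfolding of_int_prod[symmetric] of_int_sum[symmetric]
    by (subst prod_kronecker_disc_part_add) (auto simp: P_def in_prime_factors_iff)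
  have "?lhs = (\<Sum>d\<in>{d. d dvd m \<and> d > 0}. \<Sum>S\<in>Pow P. complex_of_int d powr s *
      of_int (kronecker (disc_of_primes S) d * kronecker (disc_of_primes (P - S)) (N * m div d)))"
    unfolding P_def[symmetric] expand by (simp add: sum_distrib_left)
  also have "\<dots> = (\<Sum>S\<in>Pow P. pair_sum (disc_of_primes S) (disc_of_primes (P - S)))"
    unfolding pair_sum_def by (rule sum.swap)
  also have "\<dots> = (\<Sum>(D1, D2)\<in>{(D1, D2). D1 * D2 = D \<and> D1 mod 4 = 1 \<and> D2 mod 4 = 1}. pair_sum D1 D2)"
    using sum.reindex_bij_betw[OF bij_betw_disc_factorizations[OF assms(1,2)], of "\<lambda>(D1, D2). pair_sum D1 D2"]
    by (simp add: P_def)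
  also have "\<dots> = ?rhs"
  proof -
    have "pair_sum D1 D2 = of_int (kronecker D1 (int (m_part D2 m))
          * kronecker D2 (N * (m div int (m_part D1 m * m_part D2 m)) * int (m_part D1 m)))
        * complex_of_nat (m_part D2 m) powr s
        * (\<Prod>p\<in>{p\<in>prime_factors (nat \<bar>m\<bar>). \<not> int p dvd D}.
             \<Sum>k\<le>multiplicity p (nat \<bar>m\<bar>).
               (of_int (kronecker D (int p)) * complex_of_nat p powr s) ^ k)"
      if "D1 * D2 = D" "D1 mod 4 = 1" "D2 mod 4 = 1" for D1 D2
    proof -
      have "coprime D1 D2" using assms(1) that(1) by (simp add: coprime_if_squarefree_mult)
      then show ?thesis
        using sum_divisors_kronecker_pair[OF that(2,3) _ assms(3), where N = N and s = s] that(1)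
        unfolding pair_sum_def by simp
    qed
    then show ?thesis by (intro sum.cong refl) auto
  qed
  finally show ?thesis .
qed

theorem lemma7p5:
  fixes D m :: int and \<aa> :: "real set" and s :: complex
  assumes "D > 1" and "squarefree D" and "D mod 4 = 1"
    and "m \<noteq> 0"
    and "is_ideal (OK D) \<aa>" and "\<aa> \<noteq> {0}" and "coprime_to_disc D \<aa>"
  shows "(\<Sum>d\<in>{d. d dvd m \<and> d > 0}. complex_of_int d powr s *
            (\<Prod>p\<in>prime_factors (nat D).
               of_int (kronecker (disc_part p) d
                       + kronecker (disc_part p) (int (ideal_norm (OK D) \<aa>) * m div d))))
       = (\<Sum>(D1, D2)\<in>{(D1, D2). D1 * D2 = D \<and> D1 mod 4 = 1 \<and> D2 mod 4 = 1}.
            of_int (kronecker D1 (int (m_part D2 m))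
                    * kronecker D2 (int (ideal_norm (OK D) \<aa>)
                                    * (m div int (m_part D1 m * m_part D2 m))
                                    * int (m_part D1 m)))
            * complex_of_nat (m_part D2 m) powr s
            * (\<Prod>p\<in>{p\<in>prime_factors (nat \<bar>m\<bar>). \<not> int p dvd D}.
                 \<Sum>k\<le>multiplicity p (nat \<bar>m\<bar>).
                   (of_int (kronecker D (int p)) * complex_of_nat p powr s) ^ k))"
  using sum_divisors_prod_kronecker_disc_part[OF assms(2-4), where N = "int (ideal_norm (OK D) \<aa>)"]
    \<open>D > 1\<close> by simp

end
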